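(* Let $m,d\in\mathbb N$. Let $G$ be an $m$-joined graph and let $W\subseteq V(G)$ satisfy $|W|\ge (3d+4)m$. Then there is a set $B\subseteq V(G)$ with $|B|\le m$ such that every $U\subseteq V(G)\setminus B$ with $|U|\le 2m$ satisfies $|N(U,W\setminus B)|\ge d|U|$.
   Context: A graph $G$ is $m$-joined if there is an edge between any two disjoint vertex sets each containing at least $m$ vertices. For $U\subseteq V(G)$, $N(U)=\big(\bigcup_{u\in U}N(u)\big)\setminus U$ is the exterior neighbourhood, and $N(U,W)=N(U)\cap W$. *)

theory Defs
  imports Main
begin

definition simple_graph :: "'a set \<Rightarrow> ('a \<Rightarrow> 'a \<Rightarrow> bool) \<Rightarrow> bool" where
  "simple_graph V E \<longleftrightarrow> finite V \<and> (\<forall>u v. E u v \<longrightarrow> u \<in> V \<and> v \<in> V)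
     \<and> (\<forall>u v. E u v \<longrightarrow> E v u) \<and> (\<forall>v. \<not> E v v)"

definition m_joined :: "'a set \<Rightarrow> ('a \<Rightarrow> 'a \<Rightarrow> bool) \<Rightarrow> nat \<Rightarrow> bool" where
  "m_joined V E m \<longleftrightarrow> (\<forall>A B. A \<subseteq> V \<longrightarrow> B \<subseteq> V \<longrightarrow> A \<inter> B = {} \<longrightarrow>
      card A \<ge> m \<longrightarrow> card B \<ge> m \<longrightarrow> (\<exists>a\<in>A. \<exists>b\<in>B. E a b))"

definition ext_nbhd :: "('a \<Rightarrow> 'a \<Rightarrow> bool) \<Rightarrow> 'a set \<Rightarrow> 'a set" where
  "ext_nbhd E U = (\<Union>u\<in>U. {v. E u v}) - U"

definition nbhd_in :: "('a \<Rightarrow> 'a \<Rightarrow> bool) \<Rightarrow> 'a set \<Rightarrow> 'a set \<Rightarrow> 'a set" where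
  "nbhd_in E U W = ext_nbhd E U \<inter> W"

end

theory Submission
  imports Defs
begin

text \<open>Take B of maximum size among the sets of at most m vertices with
  |N(B, W - B)| \<le> d|B|. If some U \<subseteq> V - B with |U| \<le> 2m had |N(U, W - B)| < d|U|, then
  B \<union> U would violate the expansion bound as well. By maximality |B \<union> U| > m, and then
  m-joinedness leaves fewer than m vertices of W - (B \<union> U) outside N(B \<union> U), so
  |W| < d|B \<union> U| + m + |B \<union> U| \<le> (3d + 4)m.\<close>

lemma nbhd_in_Un_subset:
  "nbhd_in E (B \<union> U) (W - (B \<union> U)) \<subseteq> nbhd_in E B (W - B) \<union> nbhd_in E U (W - B)"
  unfolding nbhd_in_def ext_nbhd_def by auto

lemma card_nbhd_in_Un_less:
  assumes "finite W" "finite B" "finite U" "B \<inter> U = {}"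
    and "card (nbhd_in E B (W - B)) \<le> d * card B"
    and "card (nbhd_in E U (W - B)) < d * card U"
  shows "card (nbhd_in E (B \<union> U) (W - (B \<union> U))) < d * card (B \<union> U)"
proof -
  have "card (nbhd_in E (B \<union> U) (W - (B \<union> U)))
        \<le> card (nbhd_in E B (W - B) \<union> nbhd_in E U (W - B))"
    using \<open>finite W\<close> by (intro card_mono nbhd_in_Un_subset) (auto simp: nbhd_in_def)
  also have "\<dots> \<le> card (nbhd_in E B (W - B)) + card (nbhd_in E U (W - B))"
    by (rule card_Un_le)
  also have "\<dots> < d * card B + d * card U"
    using assms(5,6) by linarith
  also have "\<dots> = d * card (B \<union> U)"
    using assms(2-4) by (simp add: card_Un_disjoint add_mult_distrib2)
  finally show ?thesis .
qed

lemma m_joined_card_diff_less: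
  assumes "m_joined V E m" "finite W" "W \<subseteq> V" "S \<subseteq> V" "m \<le> card S"
  shows "card (W - S) < card (nbhd_in E S (W - S)) + m"
proof -
  define R where "R = W - S - nbhd_in E S (W - S)"
  have "card R < m"
  proof (rule ccontr)
    assume "\<not> card R < m"
    moreover have "R \<subseteq> V" "S \<inter> R = {}" using \<open>W \<subseteq> V\<close> unfolding R_def by auto
    ultimately obtain a b where "a \<in> S" "b \<in> R" "E a b"
      using assms(1,4,5) unfolding m_joined_def by (meson not_less)
    then show False unfolding R_def nbhd_in_def ext_nbhd_def by auto
  qed
  have "card (W - S) \<le> card (nbhd_in E S (W - S) \<union> R)"
    using \<open>finite W\<close> by (intro card_mono) (auto simp: R_def nbhd_in_def)
  also have "\<dots> \<le> card (nbhd_in E S (W - S)) + card R"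
    by (rule card_Un_le)
  finally show ?thesis using \<open>card R < m\<close> by linarith
qed

lemma m_joined_expands_mid_sized:
  assumes "m_joined V E m" "finite W" "W \<subseteq> V" "(3 * d + 4) * m \<le> card W"
    and "finite S" "S \<subseteq> V" "m \<le> card S" "card S \<le> 3 * m"
  shows "d * card S \<le> card (nbhd_in E S (W - S))"
proof (rule ccontr)
  assume "\<not> ?thesis"
  moreover have "card (W - S) < card (nbhd_in E S (W - S)) + m"
    using m_joined_card_diff_less assms(1-3,6,7) .
  moreover have "card W \<le> card (W - S) + card S"
  proof -
    have "card W \<le> card ((W - S) \<union> (S \<inter> W))"
      using \<open>finite W\<close> by (intro card_mono) auto
    also have "\<dots> \<le> card (W - S) + card (S \<inter> W)"
      by (rule card_Un_le)
    also have "card (S \<inter> W) \<le> card S"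
      using \<open>finite S\<close> by (intro card_mono) auto
    finally show ?thesis by simp
  qed
  moreover have "d * card S \<le> d * (3 * m)"
    using \<open>card S \<le> 3 * m\<close> by simp
  moreover have "(3 * d + 4) * m = d * (3 * m) + 4 * m"
    by (simp add: algebra_simps)
  ultimately show False
    using assms(4,8) by linarith
qed

definition small_nonexpanding :: "'a set \<Rightarrow> ('a \<Rightarrow> 'a \<Rightarrow> bool) \<Rightarrow> 'a set \<Rightarrow> nat \<Rightarrow> nat \<Rightarrow> 'a set \<Rightarrow> bool" where
  "small_nonexpanding V E W m d B \<longleftrightarrow>
     B \<subseteq> V \<and> card B \<le> m \<and> card (nbhd_in E B (W - B)) \<le> d * card B"

lemma maximum_small_nonexpanding_expands:
  assumes "finite V" "m_joined V E m" "W \<subseteq> V" "(3 * d + 4) * m \<le> card W"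
    and B: "small_nonexpanding V E W m d B"
    and B_max: "\<And>B'. small_nonexpanding V E W m d B' \<Longrightarrow> card B' \<le> card B"
    and U: "U \<subseteq> V - B" "card U \<le> 2 * m"
  shows "d * card U \<le> card (nbhd_in E U (W - B))"
proof (rule ccontr)
  assume U_deficient: "\<not> d * card U \<le> card (nbhd_in E U (W - B))"
  then have "U \<noteq> {}" by auto
  have fin: "finite W" "finite B" "finite U"
    using assms(1,3) B U(1) unfolding small_nonexpanding_def by (auto intro: finite_subset)
  have nb: "card (nbhd_in E (B \<union> U) (W - (B \<union> U))) < d * card (B \<union> U)"
  proof (rule card_nbhd_in_Un_less[OF fin])
    show "B \<inter> U = {}" using U(1) by auto
    show "card (nbhd_in E B (W - B)) \<le> d * card B"
      using B unfolding small_nonexpanding_def by simp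
    show "card (nbhd_in E U (W - B)) < d * card U" using U_deficient by simp
  qed
  have card_BU: "card (B \<union> U) = card B + card U"
    using fin U(1) by (subst card_Un_disjoint) auto
  moreover have "card U > 0"
    using fin(3) \<open>U \<noteq> {}\<close> by auto
  ultimately have "\<not> small_nonexpanding V E W m d (B \<union> U)"
    using B_max by fastforce
  moreover have BU: "B \<union> U \<subseteq> V"
    using B U(1) unfolding small_nonexpanding_def by auto
  ultimately have "m \<le> card (B \<union> U)"
    using nb unfolding small_nonexpanding_def by auto
  moreover have "card (B \<union> U) \<le> 3 * m"
    using card_BU U(2) B unfolding small_nonexpanding_def by simp
  ultimately show False
    using m_joined_expands_mid_sized[OF assms(2) fin(1) assms(3,4) _ BU] fin nb by simp
qed

theorem proposition3p35:
  fixes V :: "'a set" and E :: "'a \<Rightarrow> 'a \<Rightarrow> bool" and m d :: nat and W :: "'a set"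
  assumes "simple_graph V E" and "m_joined V E m"
    and "W \<subseteq> V" and "card W \<ge> (3 * d + 4) * m"
  shows "\<exists>B. B \<subseteq> V \<and> card B \<le> m \<and>
           (\<forall>U. U \<subseteq> V - B \<longrightarrow> card U \<le> 2 * m \<longrightarrow>
                card (nbhd_in E U (W - B)) \<ge> d * card U)"
proof -
  have "finite V" using assms(1) unfolding simple_graph_def by simp
  have "small_nonexpanding V E W m d {}"
    unfolding small_nonexpanding_def nbhd_in_def ext_nbhd_def by simp
  then obtain B where B: "small_nonexpanding V E W m d B"
    and B_max: "\<And>B'. small_nonexpanding V E W m d B' \<Longrightarrow> card B' \<le> card B"
    using Lattices_Big.ex_has_greatest_nat[of "small_nonexpanding V E W m d" "{}" card "Suc m"]
    unfolding small_nonexpanding_def by (auto simp: less_Suc_eq_le)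
  show ?thesis
    using maximum_small_nonexpanding_expands[OF \<open>finite V\<close> assms(2-4) B B_max] B
    unfolding small_nonexpanding_def by blast
qed

end
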